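(* Let $P$ be a quasiconsistent policy over a DTD $D$. Then among all consistent total policies $Q$ over $D$ with $P\sqsubseteq Q$ there is a unique one, denoted $\widehat P$, such that $\widehat P\le Q$ for every consistent total policy $Q$ with $P\sqsubseteq Q$.
   Context: Let $\mathcal L$ be an infinite set of labels and $\mathsf{str}\notin\mathcal L$ a special symbol. A DTD is a triple $D=(Ele,Rg,rt)$ where $Ele\subseteq\mathcal L$ is finite, $rt\in Ele$ is the root type, and for each $A\in Ele$, $Rg(A)$ is one of: $\mathsf{str}$, $\epsilon$, $B_1,\dots,B_n$ (concatenation), $B_1+\dots+B_n$ (disjunction), or $B_1^*$ (Kleene star), where the $B_i\in Ele$ are pairwise distinct and are called subelement types of $A$. DTDs are non-recursive: the directed graph on $Ele$ with an edge $A\to B$ whenever $B$ is a subelement type of $A$ is acyclic. $\le_D$ denotes the reflexive–transitive closure of the subelement relation. We assume every element type is reachable from the root: $rt\le_D A$ for all $A\in Ele$. An XML tree is $t=(N_t,E_t,\lambda_t,r_t,v_t)$: a finite rooted unordered tree with node set $N_t$, parent–child edge set $E_t$, root $r_t$, labelling $\lambda_t:N_t\to\mathcal L\cup\{\mathsf{str}\}$, and a function $v_t$ assigning a string to each node labelled $\mathsf{str}$. The tree $t$ conforms to $D$ at $A\in Ele$ if $\lambda_t(r_t)=A$, every node is labelled by an element of $Ele\cup\{\mathsf{str}\}$, every node labelled $B\in Ele$ has children whose labels, listed in some order, form a word of the language of the regular expression $Rg(B)$ (with $Rg(B)=\mathsf{str}$ meaning a single child labelled $\mathsf{str}$ and $\epsilon$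 meaning no children), and every node labelled $\mathsf{str}$ is a leaf with a defined string value. $I_D(A)$ is the set of trees conforming to $D$ at $A$, and $I_D=I_D(rt)$. Trees $t_1,t_2$ are isomorphic, $t_1\equiv t_2$, if there is a bijection $N_{t_1}\to N_{t_2}$ preserving root, edges, labels and string values. Atomic updates on a tree $t$: $\mathsf{insert}(n,t')$ adds the tree $t'$ with its root as a new child of $n$; $\mathsf{delete}(n)$ removes $n$ and all its descendants; $\mathsf{replace}(n,t')$ removes the subtree rooted at $n$ and attaches $t'$ (by its root) as a child of the former parent of $n$; $\mathsf{replace}(n,s)$, for a string $s$, sets the string value of $n$ to $s$. An update is valid on $t$ if $n\in N_t$ and the tree $t'$ (if present) has node set disjoint from $N_t$; $[\![op]\!](t)$ denotes the result. For a sequence, $[\![op_1;\dots;op_k]\!](t)=[\![op_k]\!](\cdots[\![op_1]\!](t)\cdots)$, and the sequence is valid on $t$ if each $op_i$ is valid on the result of $op_1;\dots;op_{i-1}$. Update access types (UATs) are expressions $(A,\mathsf{insert}(B))$, $(A,\mathsf{delete}(B))$, $(A,\mathsf{replace}(B,B'))$ with $B\neq B'$, and $(A,\mathsf{replace}(\mathsf{str},\mathsf{str}))$, with $A\in Ele$; $A$ is the element type of the UAT. Such a UAT is valid for $D$ iff, respectively: $Rg(A)=B^*$; $Rg(A)=B^*$; $Rg(A)=B_1+\dots+B_n$ with $B,B'\in\{B_1,\dots,B_n\}$, $B\neq B'$; $Rg(A)=\mathsf{str}$. $\mathrm{valid}(D)$ is the set of UATs valid for $D$. An atomic update matches a UAT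 on $t$ as follows: $\mathsf{insert}(n,t')$ matches $(A,\mathsf{insert}(B))$ if $\lambda_t(n)=A$ and $t'\in I_D(B)$; $\mathsf{delete}(n)$ matches $(A,\mathsf{delete}(B))$ if $\lambda_t(n)=B$ and the parent of $n$ is labelled $A$; $\mathsf{replace}(n,t')$ matches $(A,\mathsf{replace}(B,B'))$ if $\lambda_t(n)=B$, the parent of $n$ is labelled $A$, $t'\in I_D(B')$ and $B\neq B'$; $\mathsf{replace}(n,s)$ matches $(A,\mathsf{replace}(\mathsf{str},\mathsf{str}))$ if $\lambda_t(n)=\mathsf{str}$ and the parent of $n$ is labelled $A$. For a set $S$ of UATs, $[\![S]\!]_t$ is the set of atomic updates matching some element of $S$ on $t$. A sequence $op_1;\dots;op_k$ is allowed on $t$ by $S$ if it is valid on $t$ and $op_i\in[\![S]\!]_{t_{i-1}}$ for all $i$, where $t_0=t$ and $t_i=[\![op_i]\!](t_{i-1})$. A policy over $D$ is a pair $P=(\mathcal A,\mathcal F)$ with $\mathcal A,\mathcal F\subseteq\mathrm{valid}(D)$ and $\mathcal A\cap\mathcal F=\emptyset$ (allowed and forbidden UATs); it is total if $\mathcal A\cup\mathcal F=\mathrm{valid}(D)$ and partial otherwise. $P$ is consistent if there exist no $t\in I_D$, no sequence $op_1;\dots;op_k$ ($k\ge1$) allowed on $t$ by $\mathcal A$, and no $op_0\in[\![\mathcal F]\!]_t$ valid on $t$ and non-trivial (i.e. $[\![op_0]\!](t)\not\equiv t$) such that $[\![op_1;\dots;op_k]\!](t)\equiv[\![op_0]\!](t)$.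 Writing $P=(\mathcal A_P,\mathcal F_P)$, the information ordering is $P\sqsubseteq Q$ iff $\mathcal A_P\subseteq\mathcal A_Q$ and $\mathcal F_P\subseteq\mathcal F_Q$; then $Q$ is said to extend $P$. A policy $P$ is quasiconsistent if it has a consistent total extension. The privilege ordering on total policies is $P\le Q$ iff $\mathcal A_P\subseteq\mathcal A_Q$. *)

theory Defs
  imports Main
begin

datatype 'l lab = El 'l | LStr

datatype 'l rg = RStr | REps | RConc "'l list" | RDisj "'l list" | RStar 'l

fun subs :: "'l rg \<Rightarrow> 'l list" where
  "subs RStr = []"
| "subs REps = []"
| "subs (RConc bs) = bs"
| "subs (RDisj bs) = bs"
| "subs (RStar b) = [b]"

fun rg_ok :: "'l rg \<Rightarrow> bool" where
  "rg_ok (RConc bs) = (bs \<noteq> [] \<and> distinct bs)"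
| "rg_ok (RDisj bs) = (bs \<noteq> [] \<and> distinct bs)"
| "rg_ok _ = True"

fun lang :: "'l rg \<Rightarrow> 'l lab list set" where
  "lang RStr = {[LStr]}"
| "lang REps = {[]}"
| "lang (RConc bs) = {map El bs}"
| "lang (RDisj bs) = {[El b] | b. b \<in> set bs}"
| "lang (RStar b) = {replicate k (El b) | k. True}"

record 'l dtd =
  Ele :: "'l set"
  Rg  :: "'l \<Rightarrow> 'l rg"
  rt  :: 'l

definition sub_rel :: "'l dtd \<Rightarrow> ('l \<times> 'l) set" where
  "sub_rel D = {(A, B). A \<in> Ele D \<and> B \<in> set (subs (Rg D A))}"

definition dtd :: "'l dtd \<Rightarrow> bool" where
  "dtd D \<longleftrightarrow> finite (Ele D) \<and> rt D \<in> Ele D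
     \<and> (\<forall>A\<in>Ele D. rg_ok (Rg D A) \<and> set (subs (Rg D A)) \<subseteq> Ele D)
     \<and> acyclic (sub_rel D)
     \<and> (\<forall>A\<in>Ele D. (rt D, A) \<in> (sub_rel D)\<^sup>*)"

record 'l xtree =
  nodes :: "nat set"
  edges :: "(nat \<times> nat) set"
  lab   :: "nat \<Rightarrow> 'l lab"
  root  :: nat
  val   :: "nat \<Rightarrow> string"

definition children :: "'l xtree \<Rightarrow> nat \<Rightarrow> nat set" where
  "children t n = {m. (n, m) \<in> edges t}"

definition is_tree :: "'l xtree \<Rightarrow> bool" where
  "is_tree t \<longleftrightarrow> finite (nodes t) \<and> root t \<in> nodes t
     \<and> edges t \<subseteq> nodes t \<times> nodes t
     \<and> (\<forall>m. (m, root t) \<notin> edges t)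
     \<and> (\<forall>n\<in>nodes t. n \<noteq> root t \<longrightarrow> (\<exists>!p. (p, n) \<in> edges t))
     \<and> (\<forall>n\<in>nodes t. (root t, n) \<in> (edges t)\<^sup>*)"

definition conforms :: "'l dtd \<Rightarrow> 'l \<Rightarrow> 'l xtree \<Rightarrow> bool" where
  "conforms D A t \<longleftrightarrow> lab t (root t) = El A
     \<and> (\<forall>n\<in>nodes t. lab t n \<in> El ` Ele D \<union> {LStr})
     \<and> (\<forall>n\<in>nodes t. \<forall>B. lab t n = El B \<longrightarrow>
           (\<exists>ns. distinct ns \<and> set ns = children t n \<and> map (lab t) ns \<in> lang (Rg D B)))
     \<and> (\<forall>n\<in>nodes t. lab t n = LStr \<longrightarrow> children t n = {})"

definition ID :: "'l dtd \<Rightarrow> 'l \<Rightarrow> 'l xtree set" where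
  "ID D A = {t. is_tree t \<and> conforms D A t}"

definition iso :: "'l xtree \<Rightarrow> 'l xtree \<Rightarrow> bool" where
  "iso t1 t2 \<longleftrightarrow> (\<exists>f. bij_betw f (nodes t1) (nodes t2) \<and> f (root t1) = root t2
     \<and> (\<forall>x\<in>nodes t1. \<forall>y\<in>nodes t1. (x, y) \<in> edges t1 \<longleftrightarrow> (f x, f y) \<in> edges t2)
     \<and> (\<forall>x\<in>nodes t1. lab t2 (f x) = lab t1 x)
     \<and> (\<forall>x\<in>nodes t1. lab t1 x = LStr \<longrightarrow> val t2 (f x) = val t1 x))"

datatype 'l upd =
    Ins nat "'l xtree"
  | Del nat
  | Repl nat "'l xtree"
  | ReplS nat string

definition desc :: "'l xtree \<Rightarrow> nat \<Rightarrow> nat set" where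
  "desc t n = {m. (n, m) \<in> (edges t)\<^sup>*}"

definition parent :: "'l xtree \<Rightarrow> nat \<Rightarrow> nat" where
  "parent t n = (THE p. (p, n) \<in> edges t)"

definition remove_sub :: "'l xtree \<Rightarrow> nat \<Rightarrow> 'l xtree" where
  "remove_sub t n = t\<lparr> nodes := nodes t - desc t n,
                       edges := {(x, y) \<in> edges t. x \<notin> desc t n \<and> y \<notin> desc t n} \<rparr>"

definition attach :: "'l xtree \<Rightarrow> nat \<Rightarrow> 'l xtree \<Rightarrow> 'l xtree" where
  "attach t n t' = t\<lparr> nodes := nodes t \<union> nodes t',
                      edges := edges t \<union> edges t' \<union> {(n, root t')},
                      lab := (\<lambda>x. if x \<in> nodes t' then lab t' x else lab t x),
                      val := (\<lambda>x. if x \<in> nodes t' then val t' x else val t x) \<rparr>"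

fun apply_op :: "'l upd \<Rightarrow> 'l xtree \<Rightarrow> 'l xtree" where
  "apply_op (Ins n t') t = attach t n t'"
| "apply_op (Del n) t = remove_sub t n"
| "apply_op (Repl n t') t = attach (remove_sub t n) (parent t n) t'"
| "apply_op (ReplS n s) t = t\<lparr> val := (val t)(n := s) \<rparr>"

fun valid_op :: "'l xtree \<Rightarrow> 'l upd \<Rightarrow> bool" where
  "valid_op t (Ins n t') = (n \<in> nodes t \<and> nodes t' \<inter> nodes t = {})"
| "valid_op t (Del n) = (n \<in> nodes t)"
| "valid_op t (Repl n t') = (n \<in> nodes t \<and> nodes t' \<inter> nodes t = {})"
| "valid_op t (ReplS n s) = (n \<in> nodes t)"

definition apply_seq :: "'l upd list \<Rightarrow> 'l xtree \<Rightarrow> 'l xtree" where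
  "apply_seq ops t = fold apply_op ops t"

datatype 'l uat =
    UIns 'l 'l          \<comment> \<open>(A, insert(B))\<close>
  | UDel 'l 'l          \<comment> \<open>(A, delete(B))\<close>
  | URepl 'l 'l 'l      \<comment> \<open>(A, replace(B, B'))\<close>
  | UReplS 'l           \<comment> \<open>(A, replace(str, str))\<close>

fun valid_uat :: "'l dtd \<Rightarrow> 'l uat \<Rightarrow> bool" where
  "valid_uat D (UIns A B) = (A \<in> Ele D \<and> Rg D A = RStar B)"
| "valid_uat D (UDel A B) = (A \<in> Ele D \<and> Rg D A = RStar B)"
| "valid_uat D (URepl A B B') = (A \<in> Ele D \<and> B \<noteq> B' \<and>
      (\<exists>bs. Rg D A = RDisj bs \<and> B \<in> set bs \<and> B' \<in> set bs))"
| "valid_uat D (UReplS A) = (A \<in> Ele D \<and> Rg D A = RStr)"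

definition valid :: "'l dtd \<Rightarrow> 'l uat set" where
  "valid D = {u. valid_uat D u}"

definition is_parent_lab :: "'l xtree \<Rightarrow> nat \<Rightarrow> 'l \<Rightarrow> bool" where
  "is_parent_lab t n A \<longleftrightarrow> (\<exists>p. (p, n) \<in> edges t \<and> lab t p = El A)"

fun matches :: "'l dtd \<Rightarrow> 'l xtree \<Rightarrow> 'l upd \<Rightarrow> 'l uat \<Rightarrow> bool" where
  "matches D t (Ins n t') (UIns A B) = (lab t n = El A \<and> t' \<in> ID D B)"
| "matches D t (Del n) (UDel A B) = (lab t n = El B \<and> is_parent_lab t n A)"
| "matches D t (Repl n t') (URepl A B B') =
     (lab t n = El B \<and> is_parent_lab t n A \<and> t' \<in> ID D B' \<and> B \<noteq> B')"
| "matches D t (ReplS n s) (UReplS A) = (lab t n = LStr \<and> is_parent_lab t n A)"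
| "matches D t _ _ = False"

definition in_sem :: "'l dtd \<Rightarrow> 'l uat set \<Rightarrow> 'l xtree \<Rightarrow> 'l upd \<Rightarrow> bool" where
  "in_sem D S t op \<longleftrightarrow> (\<exists>u\<in>S. matches D t op u)"

fun allowed :: "'l dtd \<Rightarrow> 'l uat set \<Rightarrow> 'l xtree \<Rightarrow> 'l upd list \<Rightarrow> bool" where
  "allowed D S t [] = True"
| "allowed D S t (op # ops) =
     (valid_op t op \<and> in_sem D S t op \<and> allowed D S (apply_op op t) ops)"

type_synonym 'l policy = "'l uat set \<times> 'l uat set"

definition policy :: "'l dtd \<Rightarrow> 'l policy \<Rightarrow> bool" where
  "policy D P \<longleftrightarrow> fst P \<subseteq> valid D \<and> snd P \<subseteq> valid D \<and> fst P \<inter> snd P = {}"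

definition total :: "'l dtd \<Rightarrow> 'l policy \<Rightarrow> bool" where
  "total D P \<longleftrightarrow> fst P \<union> snd P = valid D"

definition consistent :: "'l dtd \<Rightarrow> 'l policy \<Rightarrow> bool" where
  "consistent D P \<longleftrightarrow> \<not> (\<exists>t \<in> ID D (rt D). \<exists>ops op0.
       ops \<noteq> [] \<and> allowed D (fst P) t ops
     \<and> in_sem D (snd P) t op0 \<and> valid_op t op0 \<and> \<not> iso (apply_op op0 t) t
     \<and> iso (apply_seq ops t) (apply_op op0 t))"

text \<open>Information ordering P \<sqsubseteq> Q\<close>
definition info_le :: "'l policy \<Rightarrow> 'l policy \<Rightarrow> bool" where
  "info_le P Q \<longleftrightarrow> fst P \<subseteq> fst Q \<and> snd P \<subseteq> snd Q"

text \<open>Privilege ordering on total policies P \<le> Q\<close>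
definition priv_le :: "'l policy \<Rightarrow> 'l policy \<Rightarrow> bool" where
  "priv_le P Q \<longleftrightarrow> fst P \<subseteq> fst Q"

definition quasiconsistent :: "'l dtd \<Rightarrow> 'l policy \<Rightarrow> bool" where
  "quasiconsistent D P \<longleftrightarrow>
     (\<exists>Q. policy D Q \<and> total D Q \<and> consistent D Q \<and> info_le P Q)"

end

theory Submission
  imports Defs
begin

(* A total policy over D is determined by its set of allowed UATs,
   the forbidden ones being the remaining valid UATs.  For a nonempty family of
   total policies we form their meet: allow exactly the UATs allowed by every
   member, forbid all other valid UATs.  The key observation is that the meet of
   consistent total policies is again consistent: an attack against the meet
   (a sequence allowed by the meet that simulates a forbidden update) is
   allowed by every member, and the forbidden update is forbidden by some
   member, which is therefore inconsistent.
   Applying this to the (nonempty, by quasiconsistency) family of consistent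
   total extensions of P gives an extension of P that is below every member in
   the privilege ordering; uniqueness holds because the privilege ordering is
   antisymmetric on total policies. *)

lemma total_policy_snd:
  assumes "policy D Q" and "total D Q"
  shows "snd Q = valid D - fst Q"
  using assms unfolding policy_def total_def by blast

lemma total_policy_eqI:
  assumes "policy D Q" "total D Q" "policy D R" "total D R"
    and "fst Q = fst R"
  shows "Q = R"
  using assms total_policy_snd[of D Q] total_policy_snd[of D R]
  by (simp add: prod_eq_iff)

lemma allowed_mono:
  "allowed D S t ops \<Longrightarrow> S \<subseteq> S' \<Longrightarrow> allowed D S' t ops"
  by (induction ops arbitrary: t) (auto simp: in_sem_def)

definition meet :: "'l dtd \<Rightarrow> 'l policy set \<Rightarrow> 'l policy" where
  "meet D \<Q> = ((\<Inter>Q\<in>\<Q>. fst Q), valid D - (\<Inter>Q\<in>\<Q>. fst Q))"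

lemma meet_total_policy:
  assumes "Q \<in> \<Q>" and "\<forall>R\<in>\<Q>. policy D R"
  shows "policy D (meet D \<Q>) \<and> total D (meet D \<Q>)"
proof -
  have "(\<Inter>R\<in>\<Q>. fst R) \<subseteq> valid D"
    using assms unfolding policy_def by blast
  then show ?thesis unfolding meet_def policy_def total_def by auto
qed

lemma meet_priv_le:
  assumes "Q \<in> \<Q>"
  shows "priv_le (meet D \<Q>) Q"
  using assms unfolding meet_def priv_le_def by auto

text \<open>The meet of extensions of P extends P: a UAT forbidden by P is forbidden by
  every member, hence not allowed by any of them.\<close>

lemma meet_info_le:
  assumes "Q \<in> \<Q>" and "\<forall>R\<in>\<Q>. policy D R \<and> info_le P R" and "policy D P"
  shows "info_le P (meet D \<Q>)"
proof -
  have "fst P \<subseteq> (\<Inter>R\<in>\<Q>. fst R)"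
    using assms(2) unfolding info_le_def by blast
  moreover have "snd P \<subseteq> valid D - fst Q"
    using assms unfolding info_le_def policy_def by blast
  ultimately show ?thesis
    using assms(1) unfolding meet_def info_le_def by auto
qed

lemma meet_consistent:
  assumes "\<Q> \<noteq> {}" and members: "\<forall>Q\<in>\<Q>. policy D Q \<and> total D Q \<and> consistent D Q"
  shows "consistent D (meet D \<Q>)"
  unfolding consistent_def
proof
  assume "\<exists>t\<in>ID D (rt D). \<exists>ops op0. ops \<noteq> [] \<and> allowed D (fst (meet D \<Q>)) t ops
     \<and> in_sem D (snd (meet D \<Q>)) t op0 \<and> valid_op t op0 \<and> \<not> iso (apply_op op0 t) t
     \<and> iso (apply_seq ops t) (apply_op op0 t)"
  then obtain t ops op0 where t: "t \<in> ID D (rt D)" and ops: "ops \<noteq> []"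
    and allowed_meet: "allowed D (\<Inter>Q\<in>\<Q>. fst Q) t ops"
    and forbidden_meet: "in_sem D (valid D - (\<Inter>Q\<in>\<Q>. fst Q)) t op0"
    and attack: "valid_op t op0" "\<not> iso (apply_op op0 t) t"
      "iso (apply_seq ops t) (apply_op op0 t)"
    unfolding meet_def by auto
  from forbidden_meet obtain u where u: "u \<in> valid D" "u \<notin> (\<Inter>Q\<in>\<Q>. fst Q)"
    "matches D t op0 u"
    unfolding in_sem_def by blast
  then obtain Q where Q: "Q \<in> \<Q>" "u \<notin> fst Q" by blast
  have "snd Q = valid D - fst Q"
    using Q(1) members total_policy_snd by blast
  then have "in_sem D (snd Q) t op0"
    using u Q(2) unfolding in_sem_def by blast
  moreover have "allowed D (fst Q) t ops"
    using allowed_mono[OF allowed_meet] Q(1) by blast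
  ultimately have "\<not> consistent D Q"
    using t ops attack unfolding consistent_def by blast
  with Q(1) members show False by blast
qed

theorem proposition2:
  fixes D :: "'l dtd" and P :: "'l policy"
  assumes "infinite (UNIV :: 'l set)"
    and "dtd D"
    and "policy D P"
    and "quasiconsistent D P"
  shows "\<exists>!Ph. (policy D Ph \<and> total D Ph \<and> consistent D Ph \<and> info_le P Ph)
              \<and> (\<forall>Q. policy D Q \<and> total D Q \<and> consistent D Q \<and> info_le P Q
                     \<longrightarrow> priv_le Ph Q)"
proof -
  define \<Q> where "\<Q> = {Q. policy D Q \<and> total D Q \<and> consistent D Q \<and> info_le P Q}"
  have members: "\<forall>Q\<in>\<Q>. policy D Q \<and> total D Q \<and> consistent D Q \<and> info_le P Q"
    unfolding \<Q>_def by blast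
  obtain Q0 where Q0: "Q0 \<in> \<Q>"
    using assms(4) unfolding quasiconsistent_def \<Q>_def by blast
  have meet_total: "policy D (meet D \<Q>) \<and> total D (meet D \<Q>)"
    using meet_total_policy[OF Q0] members by blast
  have meet_is_consistent: "consistent D (meet D \<Q>)"
    using meet_consistent[of \<Q> D] Q0 members by blast
  have meet_extends: "info_le P (meet D \<Q>)"
    using meet_info_le[OF Q0 _ assms(3)] members by blast
  have least: "\<forall>Q\<in>\<Q>. priv_le (meet D \<Q>) Q"
    using meet_priv_le by blast
  have meet_in: "meet D \<Q> \<in> \<Q>"
    using meet_total meet_is_consistent meet_extends unfolding \<Q>_def by blast
  have unique: "R = meet D \<Q>" if R: "R \<in> \<Q>" "\<forall>Q\<in>\<Q>. priv_le R Q" for R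
  proof -
    have "fst R = fst (meet D \<Q>)"
      using R meet_in least unfolding priv_le_def by blast
    then show ?thesis
      using total_policy_eqI[of D R "meet D \<Q>"] R(1) meet_total members by blast
  qed
  show ?thesis
  proof (rule ex1I[of _ "meet D \<Q>"])
    show "(policy D (meet D \<Q>) \<and> total D (meet D \<Q>) \<and> consistent D (meet D \<Q>)
        \<and> info_le P (meet D \<Q>)) \<and> (\<forall>Q. policy D Q \<and> total D Q \<and> consistent D Q
        \<and> info_le P Q \<longrightarrow> priv_le (meet D \<Q>) Q)"
      using meet_in least unfolding \<Q>_def by blast
  next
    fix R
    assume "(policy D R \<and> total D R \<and> consistent D R \<and> info_le P R) \<and>
      (\<forall>Q. policy D Q \<and> total D Q \<and> consistent D Q \<and> info_le P Q \<longrightarrow> priv_le R Q)"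
    then show "R = meet D \<Q>"
      using unique unfolding \<Q>_def by blast
  qed
qed

end
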